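(* Assume $d \ge 2$. Then almost surely \[ \liminf_{n \to \infty} \frac{r_n}{(\ln n)/(d \ln\ln n)} \ge 1. \]
   Context: Fix an integer $d \ge 2$. Let $X^{(1)}, X^{(2)}, \dots$ be i.i.d. random vectors in $\mathbb{R}^d$ with independent Exponential$(1)$ coordinates. Write $x \prec y$ if $x_j<y_j$ for all $j$. For $1 \le k \le n$, $X^{(k)}$ is a current record at time $n$ if $X^{(k)} \not\prec X^{(i)}$ for all $1 \le i \le n$; $r_n$ denotes the number of current records at time $n$. *)

theory Defs
  imports "HOL-Probability.Probability"
begin

text \<open>Vectors in R^d are represented as functions nat => real, coordinates j < d.
  Strict componentwise order x \<prec> y: x_j < y_j for all j < d.\<close>
definition strictly_below :: "nat \<Rightarrow> (nat \<Rightarrow> real) \<Rightarrow> (nat \<Rightarrow> real) \<Rightarrow> bool" where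
  "strictly_below d x y \<longleftrightarrow> (\<forall>j<d. x j < y j)"

definition current_record :: "nat \<Rightarrow> (nat \<Rightarrow> nat \<Rightarrow> real) \<Rightarrow> nat \<Rightarrow> nat \<Rightarrow> bool" where
  "current_record d x n k \<longleftrightarrow> 1 \<le> k \<and> k \<le> n \<and> (\<forall>i\<in>{1..n}. \<not> strictly_below d (x k) (x i))"

definition num_records :: "nat \<Rightarrow> (nat \<Rightarrow> nat \<Rightarrow> real) \<Rightarrow> nat \<Rightarrow> nat" where
  "num_records d x n = card {k. current_record d x n k}"

end

theory Submission
  imports Defs "HOL-Real_Asymp.Real_Asymp"
begin

text \<open>
  Only the first two coordinates are needed: a point whose projection \<open>(x\<^sub>0, x\<^sub>1)\<close> is not
  strictly dominated in the plane is not strictly dominated in \<open>\<real>\<^sup>d\<close> either.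
  For \<open>N \<approx> (513/512)\<^sup>i\<close> put \<open>T = ln (N/16)\<close>, \<open>K \<approx> T/9\<close>, and cut the region just above the
  line \<open>x + y = T\<close> into the cells \<open>(9j, 9(j+1)] \<times> (T - 9j, \<infinity>)\<close>, \<open>j < K\<close>, each with the roof
  \<open>(9(j+1), \<infinity>) \<times> (T - 9j, \<infinity>)\<close> to its upper right. A cell that is hit by one of the first
  \<open>N\<close> points, by none of the points \<open>N+1, \<dots>, N'\<close>, and whose roof is hit by none of the first
  \<open>N'\<close> points contains a current record at every time \<open>n \<in> [N, N']\<close>, and distinct cells give
  distinct records. A fixed point falls into a fixed cell with probability about \<open>16/N\<close>, so
  exponential moment bounds show that, outside an event of probability \<open>O(exp (-K/9))\<close>, fewer than
  \<open>K/4\<close> cells are empty, fewer than \<open>K/4\<close> late points hit the cells and there are fewer than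
  \<open>K/4\<close> incidences between points and roofs. Borel--Cantelli along the epochs gives
  \<open>r\<^sub>n \<ge> K/4 \<ge> ln n / 36 - O(1)\<close> eventually, which is much more than \<open>ln n / (d ln ln n)\<close>.
\<close>

lemma ex_max_on_finite:
  fixes f :: "'a \<Rightarrow> 'b::linorder"
  assumes "finite S" "S \<noteq> {}"
  shows "\<exists>w\<in>S. \<forall>q\<in>S. f q \<le> f w"
proof -
  have "Max (f ` S) \<in> f ` S" using assms by simp
  then obtain w where "w \<in> S" "Max (f ` S) = f w" by blast
  moreover have "f q \<le> Max (f ` S)" if "q \<in> S" for q
    using assms(1) that by simp
  ultimately show ?thesis by auto
qed

lemma le_card_iff_ex_subset:
  assumes "finite E"
  shows "x \<le> real (card E) \<longleftrightarrow> (\<exists>S. S \<subseteq> E \<and> card S = nat \<lceil>x\<rceil>)"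
proof -
  have "nat \<lceil>x\<rceil> \<le> card E \<longleftrightarrow> (\<exists>S. S \<subseteq> E \<and> card S = nat \<lceil>x\<rceil>)"
  proof
    assume "nat \<lceil>x\<rceil> \<le> card E"
    then obtain S where "S \<subseteq> E" "card S = nat \<lceil>x\<rceil>" by (rule obtain_subset_with_card_n)
    then show "\<exists>S. S \<subseteq> E \<and> card S = nat \<lceil>x\<rceil>" by blast
  next
    assume "\<exists>S. S \<subseteq> E \<and> card S = nat \<lceil>x\<rceil>"
    then obtain S where "S \<subseteq> E" "card S = nat \<lceil>x\<rceil>" by blast
    then show "nat \<lceil>x\<rceil> \<le> card E" using card_mono[OF assms \<open>S \<subseteq> E\<close>] by linarith
  qed
  then show ?thesis by simp
qed

lemma (in prob_space) prob_sum_ge_le_exp: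
  fixes Y :: "'i \<Rightarrow> 'a \<Rightarrow> real"
  assumes Q: "finite Q" and indep_Y: "indep_vars (\<lambda>_. borel) Y Q"
    and bounded: "\<And>q \<omega>. q \<in> Q \<Longrightarrow> Y q \<omega> \<le> B"
    and mgf: "\<And>q. q \<in> Q \<Longrightarrow> expectation (\<lambda>\<omega>. exp (Y q \<omega>)) \<le> 1 + c"
  shows "prob {\<omega>\<in>space M. a \<le> (\<Sum>q\<in>Q. Y q \<omega>)} \<le> exp (real (card Q) * c - a)"
proof -
  have indep_exp: "indep_vars (\<lambda>_. borel) (\<lambda>q \<omega>. exp (Y q \<omega>)) Q"
    by (rule indep_vars_compose2[OF indep_Y]) simp
  have int: "integrable M (\<lambda>\<omega>. exp (Y q \<omega>))" if "q \<in> Q" for q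
  proof (rule integrable_const_bound[where B="exp B"])
    show "AE \<omega> in M. norm (exp (Y q \<omega>)) \<le> exp B" using bounded[OF that] by simp
    show "(\<lambda>\<omega>. exp (Y q \<omega>)) \<in> borel_measurable M"
      using indep_exp that by (simp add: indep_vars_def)
  qed
  have "prob {\<omega>\<in>space M. a \<le> (\<Sum>q\<in>Q. Y q \<omega>)} = prob {\<omega>\<in>space M. exp a \<le> (\<Prod>q\<in>Q. exp (Y q \<omega>))}"
    by (simp add: exp_sum[OF Q, symmetric])
  also have "\<dots> \<le> expectation (\<lambda>\<omega>. \<Prod>q\<in>Q. exp (Y q \<omega>)) / exp a"
    by (rule integral_Markov_inequality_measure[where A="space M"])
      (use indep_vars_integrable[OF Q indep_exp int] in \<open>auto intro!: AE_I2 prod_nonneg\<close>)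
  also have "\<dots> = (\<Prod>q\<in>Q. expectation (\<lambda>\<omega>. exp (Y q \<omega>))) / exp a"
    by (simp add: indep_vars_lebesgue_integral[OF Q indep_exp int])
  also have "\<dots> \<le> (\<Prod>q\<in>Q. exp c) / exp a"
  proof (intro divide_right_mono prod_mono conjI integral_nonneg_AE)
    fix q assume "q \<in> Q"
    then show "expectation (\<lambda>\<omega>. exp (Y q \<omega>)) \<le> exp c"
      using mgf exp_ge_add_one_self[of c] by (meson order_trans)
  qed simp_all
  finally show ?thesis by (simp add: exp_diff exp_of_nat_mult)
qed

lemma (in prob_space) expectation_exp_indicator_le:
  assumes "A \<in> events"
  shows "expectation (\<lambda>\<omega>. exp (indicator A \<omega> :: real)) \<le> 1 + 2 * prob A"
proof -
  have "expectation (\<lambda>\<omega>. exp (indicator A \<omega> :: real)) = expectation (\<lambda>\<omega>. 1 + (exp 1 - 1) * indicator A \<omega>)"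
    by (rule Bochner_Integration.integral_cong) (auto simp: indicator_def)
  also have "\<dots> = 1 + (exp 1 - 1) * prob A"
  proof -
    have "integrable M (indicator A :: 'a \<Rightarrow> real)"
      using assms by (intro integrable_real_indicator) (simp_all add: less_top[symmetric])
    then show ?thesis using assms by (simp add: prob_space)
  qed
  also have "\<dots> \<le> 1 + 2 * prob A"
    using exp_le by (intro add_left_mono mult_right_mono) auto
  finally show ?thesis .
qed

lemma exp_minus_nine_le: "exp (- 9 :: real) \<le> 1 / 2"
proof -
  have "2 \<le> exp (9 :: real)" using exp_ge_add_one_self[of 9] by simp
  then show ?thesis by (simp add: exp_minus field_simps)
qed

lemma exp_minus_eight_le: "exp (- 8 :: real) \<le> 1 / 256"
proof -
  have "(2::real) ^ 8 \<le> exp 1 ^ 8"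
    using exp_ge_add_one_self[of 1] by (intro power_mono) simp_all
  then have "256 \<le> exp (8 :: real)" by (simp add: exp_of_nat_mult[symmetric])
  then show ?thesis by (simp add: exp_minus field_simps)
qed

lemma sum_power_le_geometric:
  fixes r :: real
  assumes "0 \<le> r" "r < 1"
  shows "(\<Sum>t\<in>{1..K}. r ^ t) \<le> r / (1 - r)"
  using assms by (simp add: sum_gp divide_right_mono)

section \<open>Cells and roofs of a staircase\<close>

definition cell :: "real \<Rightarrow> real \<Rightarrow> nat \<Rightarrow> (real \<times> real) set" where
  "cell H T j = {real j * H<..(real j + 1) * H} \<times> {T - real j * H<..}"

definition roof :: "real \<Rightarrow> real \<Rightarrow> nat \<Rightarrow> (real \<times> real) set" where
  "roof H T j = {(real j + 1) * H<..} \<times> {T - real j * H<..}"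

lemma cell_borel [measurable]: "cell H T j \<in> sets borel"
  and roof_borel [measurable]: "roof H T j \<in> sets borel"
  unfolding cell_def roof_def by (simp_all add: borel_prod [symmetric])

lemma cell_disjoint:
  assumes "H > 0" "p \<in> cell H T j" "p \<in> cell H T j'"
  shows "j = j'"
proof -
  have "real j * H < (real j' + 1) * H" "real j' * H < (real j + 1) * H"
    using assms(2,3) by (auto simp: cell_def)
  then have "real j < real j' + 1" "real j' < real j + 1"
    using \<open>H > 0\<close> by (simp_all add: mult_less_cancel_right)
  then show ?thesis by linarith
qed

lemma roof_between:
  assumes "H > 0" "u \<le> j" "j \<le> v" "p \<in> roof H T u" "p \<in> roof H T v"
  shows "p \<in> roof H T j"
proof -
  have "(real j + 1) * H \<le> (real v + 1) * H" "real u * H \<le> real j * H"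
    using assms(1-3) by (simp_all add: mult_right_mono)
  then show ?thesis using assms(4,5) by (auto simp: roof_def)
qed

lemma strictly_above_cell:
  assumes "(a, b) \<in> cell H T j" "a < a'" "b < b'"
  shows "(a', b') \<in> cell H T j \<or> (a', b') \<in> roof H T j"
  using assms by (auto simp: cell_def roof_def)

definition good_cells :: "real \<Rightarrow> real \<Rightarrow> nat \<Rightarrow> nat \<Rightarrow> nat \<Rightarrow> (nat \<Rightarrow> real \<times> real) \<Rightarrow> nat set" where
  "good_cells H T K N N' p = {j. j < K \<and> (\<exists>q\<in>{1..N}. p q \<in> cell H T j)
     \<and> (\<forall>q\<in>{N<..N'}. p q \<notin> cell H T j) \<and> (\<forall>q\<in>{1..N'}. p q \<notin> roof H T j)}"

definition empty_cells :: "real \<Rightarrow> real \<Rightarrow> nat \<Rightarrow> nat \<Rightarrow> (nat \<Rightarrow> real \<times> real) \<Rightarrow> nat set" where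
  "empty_cells H T K N p = {j. j < K \<and> (\<forall>q\<in>{1..N}. p q \<notin> cell H T j)}"

definition late_cell_hits :: "real \<Rightarrow> real \<Rightarrow> nat \<Rightarrow> nat \<Rightarrow> nat \<Rightarrow> (nat \<Rightarrow> real \<times> real) \<Rightarrow> nat" where
  "late_cell_hits H T K N N' p = card {q\<in>{N<..N'}. p q \<in> (\<Union>j<K. cell H T j)}"

definition roof_hits :: "real \<Rightarrow> real \<Rightarrow> nat \<Rightarrow> nat \<Rightarrow> (nat \<Rightarrow> real \<times> real) \<Rightarrow> nat" where
  "roof_hits H T K N' p = (\<Sum>q\<in>{1..N'}. card {j. j < K \<and> p q \<in> roof H T j})"

lemma finite_current_records: "finite {k. current_record d x n k}"
  by (rule finite_subset[of _ "{1..n}"]) (auto simp: current_record_def)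

text \<open>In a good cell, the early point with the largest coordinate sum is a record at every time in
  \<open>[N, N']\<close>: whatever dominates it lies in the same cell or in the roof.\<close>

lemma current_record_if_max_in_good_cell:
  fixes x :: "nat \<Rightarrow> nat \<Rightarrow> real"
  defines "p \<equiv> \<lambda>q. (x q 0, x q 1)"
  assumes "d \<ge> 2" "N \<le> n" "n \<le> N'" "j \<in> good_cells H T K N N' p"
    and w: "w \<in> {1..N}" "p w \<in> cell H T j"
    and w_max: "\<And>q. q \<in> {1..N} \<Longrightarrow> p q \<in> cell H T j \<Longrightarrow> x q 0 + x q 1 \<le> x w 0 + x w 1"
  shows "current_record d x n w"
proof -
  have "\<not> strictly_below d (x w) (x i)" if i: "i \<in> {1..n}" for i
  proof
    assume "strictly_below d (x w) (x i)"
    then have lt: "x w 0 < x i 0" "x w 1 < x i 1"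
      using \<open>d \<ge> 2\<close> by (auto simp: strictly_below_def)
    then have "p i \<in> cell H T j \<or> p i \<in> roof H T j"
      using strictly_above_cell[of "x w 0" "x w 1" H T j "x i 0" "x i 1"] w(2) by (simp add: p_def)
    moreover have "\<not> (i \<in> {1..N} \<and> p i \<in> cell H T j)"
      using w_max[of i] lt by linarith
    ultimately show False
      using i \<open>n \<le> N'\<close> \<open>j \<in> good_cells H T K N N' p\<close>
      by (cases "i \<le> N") (auto simp: good_cells_def)
  qed
  then show ?thesis using w(1) \<open>N \<le> n\<close> by (auto simp: current_record_def)
qed

lemma card_good_cells_le_num_records:
  fixes x :: "nat \<Rightarrow> nat \<Rightarrow> real"
  assumes "d \<ge> 2" "H > 0" "N \<le> n" "n \<le> N'"
  shows "card (good_cells H T K N N' (\<lambda>q. (x q 0, x q 1))) \<le> num_records d x n"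
proof -
  define p where "p = (\<lambda>q. (x q 0, x q 1))"
  define G where "G = good_cells H T K N N' p"
  define S where "S j = {q\<in>{1..N}. p q \<in> cell H T j}" for j
  have "\<exists>w\<in>S j. \<forall>q\<in>S j. x q 0 + x q 1 \<le> x w 0 + x w 1" if "j \<in> G" for j
    using that by (intro ex_max_on_finite) (auto simp: G_def good_cells_def S_def)
  then obtain w where wS: "\<And>j. j \<in> G \<Longrightarrow> w j \<in> S j"
    and w_max: "\<And>j q. j \<in> G \<Longrightarrow> q \<in> S j \<Longrightarrow> x q 0 + x q 1 \<le> x (w j) 0 + x (w j) 1"
    by metis
  have "current_record d x n (w j)" if "j \<in> G" for j
    using current_record_if_max_in_good_cell[OF assms(1,3,4), where H = H and T = T and K = K and j = j] wS[OF that] w_max[OF that] that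
    by (simp add: G_def S_def p_def)
  moreover have "inj_on w G"
  proof (rule inj_onI)
    fix j j' assume jj': "j \<in> G" "j' \<in> G" "w j = w j'"
    have "p (w j) \<in> cell H T j" "p (w j) \<in> cell H T j'"
      using wS[OF jj'(1)] wS[OF jj'(2)] jj'(3) by (simp_all add: S_def)
    then show "j = j'" by (rule cell_disjoint[OF \<open>H > 0\<close>])
  qed
  ultimately have "card G \<le> card {k. current_record d x n k}"
    by (intro card_inj_on_le finite_current_records) auto
  then show ?thesis by (simp add: G_def p_def num_records_def)
qed

lemma card_good_cells_ge:
  assumes "H > 0"
  shows "K \<le> card (good_cells H T K N N' p) + card (empty_cells H T K N p)
    + late_cell_hits H T K N N' p + roof_hits H T K N' p"
proof -
  define G where "G = good_cells H T K N N' p"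
  define E where "E = empty_cells H T K N p"
  define L where "L = {j. j < K \<and> (\<exists>q\<in>{N<..N'}. p q \<in> cell H T j)}"
  define R where "R = {j. j < K \<and> (\<exists>q\<in>{1..N'}. p q \<in> roof H T j)}"
  have "{..<K} \<subseteq> G \<union> E \<union> L \<union> R"
    unfolding G_def E_def L_def R_def good_cells_def empty_cells_def by blast
  moreover have "G \<union> E \<union> L \<union> R \<subseteq> {..<K}"
    unfolding G_def E_def L_def R_def good_cells_def empty_cells_def by blast
  ultimately have "K \<le> card (G \<union> E \<union> L \<union> R)"
    by (metis card_lessThan card_mono finite_lessThan finite_subset)
  moreover have "card (G \<union> E \<union> L \<union> R) \<le> card G + card E + card L + card R"
    using card_Un_le[of "G \<union> E \<union> L" R] card_Un_le[of "G \<union> E" L] card_Un_le[of G E] by linarith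
  moreover have "card L \<le> late_cell_hits H T K N N' p"
  proof -
    have "\<exists>q\<in>{N<..N'}. p q \<in> cell H T j" if "j \<in> L" for j
      using that by (simp add: L_def)
    then obtain q where q: "\<And>j. j \<in> L \<Longrightarrow> q j \<in> {N<..N'} \<and> p (q j) \<in> cell H T j"
      by metis
    then have "inj_on q L" using cell_disjoint[OF assms] by (metis inj_onI)
    then show ?thesis
      unfolding late_cell_hits_def by (rule card_inj_on_le) (use q in \<open>auto simp: L_def\<close>)
  qed
  moreover have "card R \<le> roof_hits H T K N' p"
  proof -
    have "R = (\<Union>q\<in>{1..N'}. {j. j < K \<and> p q \<in> roof H T j})" unfolding R_def by blast
    then show ?thesis unfolding roof_hits_def by (simp add: card_UN_le)
  qed
  ultimately show ?thesis unfolding G_def E_def by linarith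
qed

text \<open>The cells whose roof contains \<open>p\<close> form an interval; if there are \<open>t\<close> of them and \<open>j\<close> is
  the first, then \<open>p\<close> lies in the roofs of both \<open>j\<close> and \<open>j + t - 1\<close>.\<close>

lemma exp_card_roofs_le:
  assumes "H > 0"
  shows "exp (\<Sum>j<K. indicator (roof H T j) p)
    \<le> 1 + (\<Sum>t\<in>{1..K}. exp (real t) * indicator (\<Union>j<K. roof H T j \<inter> roof H T (j + (t - 1))) p)"
proof -
  define J where "J = {j. j < K \<and> p \<in> roof H T j}"
  have "(\<Sum>j<K. indicator (roof H T j) p) = real (card J)"
    by (simp add: indicator_def sum.If_cases J_def Int_def)
  moreover have "exp (real (card J))
    \<le> 1 + (\<Sum>t\<in>{1..K}. exp (real t) * indicator (\<Union>j<K. roof H T j \<inter> roof H T (j + (t - 1))) p)"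
  proof (cases "J = {}")
    case True
    then show ?thesis by (simp add: sum_nonneg)
  next
    case False
    have "finite J" by (simp add: J_def)
    define u where "u = Min J"
    define v where "v = Max J"
    have uJ: "u \<in> J" and vJ: "v \<in> J"
      using Min_in[OF \<open>finite J\<close> False] Max_in[OF \<open>finite J\<close> False] by (simp_all add: u_def v_def)
    then have u: "u < K" "p \<in> roof H T u" and v: "p \<in> roof H T v" by (auto simp: J_def)
    have "J \<subseteq> {u..v}"
      using Min_le[OF \<open>finite J\<close>] Max_ge[OF \<open>finite J\<close>] by (auto simp: u_def v_def)
    then have "card J \<le> Suc v - u" using card_mono[of "{u..v}" J] by simp
    moreover have "card J \<le> K"
      using card_mono[of "{..<K}" J] by (auto simp: J_def)
    moreover have "0 < card J" using False \<open>finite J\<close> by auto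
    ultimately have t: "card J \<in> {1..K}" and uv: "u + (card J - 1) \<le> v" by auto
    then have "p \<in> roof H T u \<inter> roof H T (u + (card J - 1))"
      using roof_between[OF assms le_add1 uv u(2) v] u(2) by simp
    then have "p \<in> (\<Union>j<K. roof H T j \<inter> roof H T (j + (card J - 1)))"
      using u(1) by blast
    then have "exp (real (card J)) = exp (real (card J))
        * indicator (\<Union>j<K. roof H T j \<inter> roof H T (j + (card J - 1))) p"
      by simp
    also have "\<dots> \<le> (\<Sum>t\<in>{1..K}. exp (real t) * indicator (\<Union>j<K. roof H T j \<inter> roof H T (j + (t - 1))) p)"
      by (rule member_le_sum[OF t]) auto
    finally show ?thesis by simp
  qed
  ultimately show ?thesis by simp
qed

section \<open>A sample of points with independent exponential coordinates\<close>

locale exponential_sample = prob_space M for M :: "'a measure" +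
  fixes X :: "nat \<Rightarrow> nat \<Rightarrow> 'a \<Rightarrow> real" and d :: nat
  assumes two_le_dim: "2 \<le> d"
    and indep_coordinates: "indep_vars (\<lambda>_. borel) (\<lambda>(k, j). X k j) ({1..} \<times> {..<d})"
    and exponential_coordinates:
      "\<And>k j. 1 \<le> k \<Longrightarrow> j < d \<Longrightarrow> distributed M lborel (X k j) (exponential_density 1)"
begin

definition plane_point :: "nat \<Rightarrow> 'a \<Rightarrow> real \<times> real" where
  "plane_point q \<omega> = (X q 0 \<omega>, X q 1 \<omega>)"

lemma indep_plane_points: "indep_vars (\<lambda>_. borel) plane_point {1..}"
proof -
  define K where "K q = {(q, 0::nat), (q, 1)}" for q :: nat
  have "indep_vars (\<lambda>q. PiM (K q) (\<lambda>_. borel)) (\<lambda>q \<omega>. \<lambda>i\<in>K q. (\<lambda>(k, j). X k j) i \<omega>) {1..}"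
    by (rule indep_vars_restrict[OF indep_coordinates])
      (use two_le_dim in \<open>auto simp: K_def disjoint_family_on_def\<close>)
  then have "indep_vars (\<lambda>_. borel)
      (\<lambda>q \<omega>. (\<lambda>v. (v (q, 0), v (q, 1))) (\<lambda>i\<in>K q. (\<lambda>(k, j). X k j) i \<omega>)) {1..}"
    by (rule indep_vars_compose2)
      (auto simp: K_def intro!: borel_measurable_Pair measurable_component_singleton)
  moreover have "plane_point = (\<lambda>q \<omega>. (X q 0 \<omega>, X q 1 \<omega>))"
    by (simp add: fun_eq_iff plane_point_def)
  ultimately show ?thesis by (simp add: K_def)
qed

lemma measurable_plane_point: "1 \<le> q \<Longrightarrow> plane_point q \<in> borel_measurable M"
  using indep_plane_points by (simp add: indep_vars_def)

lemma plane_point_events: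
  assumes "1 \<le> q" "U \<in> sets borel"
  shows "{\<omega>\<in>space M. plane_point q \<omega> \<in> U} \<in> events"
  using measurable_sets[OF measurable_plane_point[OF assms(1)] assms(2)]
  by (simp add: vimage_def Int_def conj_commute)

lemma borel_measurable_plane_point_comp:
  "1 \<le> q \<Longrightarrow> f \<in> borel_measurable borel \<Longrightarrow> (\<lambda>\<omega>. f (plane_point q \<omega>)) \<in> borel_measurable M"
  by (rule measurable_compose[OF measurable_plane_point])

lemma indicator_plane_point:
  assumes "1 \<le> q" "U \<in> sets borel"
  shows "integrable M (\<lambda>\<omega>. indicator U (plane_point q \<omega>) :: real)"
    and "expectation (\<lambda>\<omega>. indicator U (plane_point q \<omega>) :: real) = prob {\<omega>\<in>space M. plane_point q \<omega> \<in> U}"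
proof -
  have eq: "AE \<omega> in M. indicator U (plane_point q \<omega>) = (indicator {\<omega>\<in>space M. plane_point q \<omega> \<in> U} \<omega> :: real)"
    by (auto simp: indicator_def)
  have ev: "{\<omega>\<in>space M. plane_point q \<omega> \<in> U} \<in> events" by (rule plane_point_events[OF assms])
  show "integrable M (\<lambda>\<omega>. indicator U (plane_point q \<omega>) :: real)"
    using ev by (subst integrable_cong_AE[OF _ _ eq])
      (auto intro!: integrable_real_indicator borel_measurable_plane_point_comp assms simp: less_top[symmetric])
  show "expectation (\<lambda>\<omega>. indicator U (plane_point q \<omega>) :: real) = prob {\<omega>\<in>space M. plane_point q \<omega> \<in> U}"
    using ev by (subst integral_cong_AE[OF _ _ eq]) (auto intro!: borel_measurable_plane_point_comp assms)
qed

lemma prob_plane_point_Times: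
  assumes "1 \<le> q" "A \<in> sets borel" "B \<in> sets borel"
  shows "prob {\<omega>\<in>space M. plane_point q \<omega> \<in> A \<times> B}
    = prob {\<omega>\<in>space M. X q 0 \<omega> \<in> A} * prob {\<omega>\<in>space M. X q 1 \<omega> \<in> B}"
proof -
  define C where "C = (\<lambda>(k::nat, j::nat). if j = 0 then A else B)"
  have "{\<omega>\<in>space M. plane_point q \<omega> \<in> A \<times> B}
      = (\<Inter>i\<in>{(q, 0), (q, 1)}. (\<lambda>(k, j). X k j) i -` C i \<inter> space M)"
    by (auto simp: C_def plane_point_def)
  also have "prob \<dots> = (\<Prod>i\<in>{(q, 0), (q, 1)}. prob ((\<lambda>(k, j). X k j) i -` C i \<inter> space M))"
    by (rule indep_varsD[OF indep_coordinates]) (use assms two_le_dim in \<open>auto simp: C_def\<close>)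
  also have "\<dots> = prob {\<omega>\<in>space M. X q 0 \<omega> \<in> A} * prob {\<omega>\<in>space M. X q 1 \<omega> \<in> B}"
    by (simp add: C_def vimage_def Int_def conj_commute)
  finally show ?thesis .
qed

lemma prob_coordinate_greater:
  assumes "1 \<le> k" "j < d" "0 \<le> a"
  shows "prob {\<omega>\<in>space M. X k j \<omega> \<in> {a<..}} = exp (- a)"
  using exponential_distributedD_gt[OF exponential_coordinates[OF assms(1,2)] assms(3)] by simp

lemma prob_coordinate_between:
  assumes "1 \<le> k" "j < d" "0 \<le> a" "a \<le> b"
  shows "prob {\<omega>\<in>space M. X k j \<omega> \<in> {a<..b}} = exp (- a) - exp (- b)"
proof -
  have "X k j \<in> borel_measurable M"
    using indep_coordinates assms(1,2) by (auto simp: indep_vars_def)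
  have "{\<omega>\<in>space M. X k j \<omega> \<in> {a<..b}}
      = {\<omega>\<in>space M. X k j \<omega> \<in> {a<..}} - {\<omega>\<in>space M. X k j \<omega> \<in> {b<..}}"
    using assms(4) by auto
  also have "prob \<dots> = prob {\<omega>\<in>space M. X k j \<omega> \<in> {a<..}} - prob {\<omega>\<in>space M. X k j \<omega> \<in> {b<..}}"
    by (rule finite_measure_Diff) (use \<open>X k j \<in> borel_measurable M\<close> assms(4) in auto)
  finally show ?thesis using assms prob_coordinate_greater by simp
qed

lemma prob_plane_point_cell:
  assumes "1 \<le> q" "H > 0" "real j * H \<le> T"
  shows "prob {\<omega>\<in>space M. plane_point q \<omega> \<in> cell H T j} = exp (- T) * (1 - exp (- H))"
proof -
  have "prob {\<omega>\<in>space M. plane_point q \<omega> \<in> cell H T j}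
      = prob {\<omega>\<in>space M. X q 0 \<omega> \<in> {real j * H<..(real j + 1) * H}}
        * prob {\<omega>\<in>space M. X q 1 \<omega> \<in> {T - real j * H<..}}"
    unfolding cell_def by (rule prob_plane_point_Times[OF assms(1)]) auto
  also have "\<dots> = (exp (- (real j * H)) - exp (- ((real j + 1) * H))) * exp (- (T - real j * H))"
  proof -
    have "prob {\<omega>\<in>space M. X q 0 \<omega> \<in> {real j * H<..(real j + 1) * H}}
        = exp (- (real j * H)) - exp (- ((real j + 1) * H))"
      by (rule prob_coordinate_between) (use assms two_le_dim in \<open>auto simp: algebra_simps\<close>)
    moreover have "prob {\<omega>\<in>space M. X q 1 \<omega> \<in> {T - real j * H<..}} = exp (- (T - real j * H))"
      by (rule prob_coordinate_greater) (use assms two_le_dim in auto)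
    ultimately show ?thesis by simp
  qed
  also have "\<dots> = exp (- T) * (1 - exp (- H))"
    by (simp add: algebra_simps flip: exp_add)
  finally show ?thesis .
qed

lemma prob_plane_point_roofs:
  assumes "1 \<le> q" "H > 0" "real j * H \<le> T"
  shows "prob {\<omega>\<in>space M. plane_point q \<omega> \<in> roof H T j \<inter> roof H T (j + s)}
    = exp (- T - (real s + 1) * H)"
proof -
  have "(real j + 1) * H \<le> (real (j + s) + 1) * H" "T - real (j + s) * H \<le> T - real j * H"
    using assms(2) by (simp_all add: mult_right_mono)
  then have "roof H T j \<inter> roof H T (j + s) = {(real (j + s) + 1) * H<..} \<times> {T - real j * H<..}"
    by (auto simp: roof_def)
  then have "prob {\<omega>\<in>space M. plane_point q \<omega> \<in> roof H T j \<inter> roof H T (j + s)}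
      = prob {\<omega>\<in>space M. X q 0 \<omega> \<in> {(real (j + s) + 1) * H<..}}
        * prob {\<omega>\<in>space M. X q 1 \<omega> \<in> {T - real j * H<..}}"
    by (simp only:) (rule prob_plane_point_Times[OF assms(1)], auto)
  also have "\<dots> = exp (- ((real (j + s) + 1) * H)) * exp (- (T - real j * H))"
  proof -
    have "prob {\<omega>\<in>space M. X q 0 \<omega> \<in> {(real (j + s) + 1) * H<..}} = exp (- ((real (j + s) + 1) * H))"
      by (rule prob_coordinate_greater) (use assms two_le_dim in auto)
    moreover have "prob {\<omega>\<in>space M. X q 1 \<omega> \<in> {T - real j * H<..}} = exp (- (T - real j * H))"
      by (rule prob_coordinate_greater) (use assms two_le_dim in auto)
    ultimately show ?thesis by simp
  qed
  also have "\<dots> = exp (- T - (real s + 1) * H)"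
    by (simp add: algebra_simps flip: exp_add)
  finally show ?thesis .
qed

lemma prob_plane_point_cells:
  assumes "1 \<le> q" "H > 0" "S \<subseteq> {..<K}" "real K * H \<le> T"
  shows "prob {\<omega>\<in>space M. plane_point q \<omega> \<in> (\<Union>j\<in>S. cell H T j)}
    = real (card S) * (exp (- T) * (1 - exp (- H)))"
proof -
  have "finite S" using assms(3) finite_subset by blast
  have "prob {\<omega>\<in>space M. plane_point q \<omega> \<in> (\<Union>j\<in>S. cell H T j)}
      = prob (\<Union>j\<in>S. {\<omega>\<in>space M. plane_point q \<omega> \<in> cell H T j})"
    by (rule arg_cong[where f = prob]) blast
  also have "\<dots> = (\<Sum>j\<in>S. prob {\<omega>\<in>space M. plane_point q \<omega> \<in> cell H T j})"
  proof (rule measure_finite_Union[OF \<open>finite S\<close>])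
    show "disjoint_family_on (\<lambda>j. {\<omega>\<in>space M. plane_point q \<omega> \<in> cell H T j}) S"
      using cell_disjoint[OF assms(2)] unfolding disjoint_family_on_def by blast
  qed (use plane_point_events[OF assms(1)] in auto)
  also have "\<dots> = (\<Sum>j\<in>S. exp (- T) * (1 - exp (- H)))"
  proof (rule sum.cong[OF refl])
    fix j assume "j \<in> S"
    then have "real j * H \<le> real K * H" using assms(2,3) by (auto intro: mult_right_mono)
    then show "prob {\<omega>\<in>space M. plane_point q \<omega> \<in> cell H T j} = exp (- T) * (1 - exp (- H))"
      using assms(4) by (intro prob_plane_point_cell[OF assms(1,2)]) simp
  qed
  finally show ?thesis by simp
qed

lemma prob_plane_points_avoid:
  assumes U: "U \<in> sets borel" and m: "\<And>q. 1 \<le> q \<Longrightarrow> prob {\<omega>\<in>space M. plane_point q \<omega> \<in> U} = m"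
  shows "prob {\<omega>\<in>space M. \<forall>q\<in>{1..N}. plane_point q \<omega> \<notin> U} \<le> exp (- (m * real N))"
proof (cases "N = 0")
  case False
  have "prob {\<omega>\<in>space M. \<forall>q\<in>{1..N}. plane_point q \<omega> \<notin> U}
      = prob (\<Inter>q\<in>{1..N}. plane_point q -` (- U) \<inter> space M)"
    using False by (intro arg_cong[where f = prob]) auto
  also have "\<dots> = (\<Prod>q\<in>{1..N}. prob (plane_point q -` (- U) \<inter> space M))"
    using False U by (intro indep_varsD[OF indep_plane_points]) auto
  also have "\<dots> = (\<Prod>q\<in>{1..N}. 1 - m)"
  proof (rule prod.cong[OF refl])
    fix q assume "q \<in> {1..N}"
    then have "prob (space M - {\<omega>\<in>space M. plane_point q \<omega> \<in> U}) = 1 - m"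
      using m plane_point_events[OF _ U] by (simp add: prob_compl)
    moreover have "plane_point q -` (- U) \<inter> space M = space M - {\<omega>\<in>space M. plane_point q \<omega> \<in> U}"
      by auto
    ultimately show "prob (plane_point q -` (- U) \<inter> space M) = 1 - m" by simp
  qed
  also have "\<dots> = (1 - m) ^ N" by simp
  also have "\<dots> \<le> exp (- m) ^ N"
    using m[of 1] prob_le_1 exp_ge_add_one_self[of "- m"] by (intro power_mono) auto
  finally show ?thesis by (simp add: exp_of_nat_mult[symmetric] mult.commute)
qed simp

lemma prob_plane_point_roof_pairs_le:
  assumes "1 \<le> q" "H > 0" "real K * H \<le> T" "1 \<le> t"
  shows "prob {\<omega>\<in>space M. plane_point q \<omega> \<in> (\<Union>j<K. roof H T j \<inter> roof H T (j + (t - 1)))}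
    \<le> real K * exp (- T - real t * H)"
proof -
  have "prob {\<omega>\<in>space M. plane_point q \<omega> \<in> (\<Union>j<K. roof H T j \<inter> roof H T (j + (t - 1)))}
      = prob (\<Union>j<K. {\<omega>\<in>space M. plane_point q \<omega> \<in> roof H T j \<inter> roof H T (j + (t - 1))})"
    by (rule arg_cong[where f = prob]) blast
  also have "\<dots> \<le> (\<Sum>j<K. prob {\<omega>\<in>space M. plane_point q \<omega> \<in> roof H T j \<inter> roof H T (j + (t - 1))})"
    by (rule measure_UNION_le)
      (simp_all only: plane_point_events[OF assms(1)] sets.Int roof_borel finite_lessThan)
  also have "\<dots> = (\<Sum>j<K. exp (- T - real t * H))"
  proof (rule sum.cong[OF refl])
    fix j assume "j \<in> {..<K}"
    then have "real j * H \<le> T"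
      using assms(2,3) by (meson lessThan_iff less_imp_le mult_right_mono of_nat_le_iff order_trans)
    then show "prob {\<omega>\<in>space M. plane_point q \<omega> \<in> roof H T j \<inter> roof H T (j + (t - 1))}
        = exp (- T - real t * H)"
      using prob_plane_point_roofs[OF assms(1,2), of j T "t - 1"] assms(4) by (simp add: of_nat_diff)
  qed
  finally show ?thesis by simp
qed

lemma expectation_exp_roof_count_le:
  assumes "1 \<le> q" "H > 0" "real K * H \<le> T"
  shows "expectation (\<lambda>\<omega>. exp (\<Sum>j<K. indicator (roof H T j) (plane_point q \<omega>)))
    \<le> 1 + (\<Sum>t\<in>{1..K}. exp (real t) * (real K * exp (- T - real t * H)))"
proof -
  define V where "V t = (\<Union>j<K. roof H T j \<inter> roof H T (j + (t - 1)))" for t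
  have V: "V t \<in> sets borel" for t by (simp add: V_def)
  note ind_V = indicator_plane_point[OF assms(1) V]
  have "expectation (\<lambda>\<omega>. exp (\<Sum>j<K. indicator (roof H T j) (plane_point q \<omega>)))
      \<le> expectation (\<lambda>\<omega>. 1 + (\<Sum>t\<in>{1..K}. exp (real t) * indicator (V t) (plane_point q \<omega>)))"
  proof (rule integral_mono)
    have "(\<Sum>j<K. indicator (roof H T j) p :: real) \<le> real K" for p
      using sum_mono[of "{..<K}" "\<lambda>j. indicator (roof H T j) p :: real" "\<lambda>_. 1"] by (simp add: indicator_def)
    then show "integrable M (\<lambda>\<omega>. exp (\<Sum>j<K. indicator (roof H T j) (plane_point q \<omega>)) :: real)"
      by (intro integrable_const_bound[where B = "exp (real K)"] borel_measurable_plane_point_comp assms(1))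
        auto
    show "integrable M (\<lambda>\<omega>. 1 + (\<Sum>t\<in>{1..K}. exp (real t) * indicator (V t) (plane_point q \<omega>)) :: real)"
      by (intro Bochner_Integration.integrable_add integrable_const Bochner_Integration.integrable_sum
          integrable_mult_right ind_V)
    show "exp (\<Sum>j<K. indicator (roof H T j) (plane_point q \<omega>))
        \<le> 1 + (\<Sum>t\<in>{1..K}. exp (real t) * indicator (V t) (plane_point q \<omega>))" for \<omega>
      unfolding V_def by (rule exp_card_roofs_le[OF assms(2)])
  qed
  also have "\<dots> = 1 + (\<Sum>t\<in>{1..K}. exp (real t) * prob {\<omega>\<in>space M. plane_point q \<omega> \<in> V t})"
  proof -
    have "integrable M (\<lambda>\<omega>. \<Sum>t\<in>{1..K}. exp (real t) * indicator (V t) (plane_point q \<omega>) :: real)"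
      by (intro Bochner_Integration.integrable_sum integrable_mult_right ind_V)
    then show ?thesis
      by (simp only: Bochner_Integration.integral_add[OF integrable_const]
          Bochner_Integration.integral_sum[OF integrable_mult_right[OF ind_V(1)]]
          integral_mult_right_zero ind_V(2) prob_space lebesgue_integral_const) simp
  qed
  also have "\<dots> \<le> 1 + (\<Sum>t\<in>{1..K}. exp (real t) * (real K * exp (- T - real t * H)))"
    unfolding V_def using prob_plane_point_roof_pairs_le[OF assms] by (intro add_left_mono sum_mono mult_left_mono) auto
  finally show ?thesis .
qed

lemma indep_plane_point_comp:
  assumes "\<And>q. f q \<in> borel_measurable borel" "Q \<subseteq> {1..}"
  shows "indep_vars (\<lambda>_. borel) (\<lambda>q \<omega>. f q (plane_point q \<omega>)) Q"
  by (rule indep_vars_compose2[OF indep_vars_subset[OF indep_plane_points assms(2)]]) (use assms(1) in simp)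

definition many_empty_cells :: "nat \<Rightarrow> real \<Rightarrow> nat \<Rightarrow> 'a set" where
  "many_empty_cells N T K =
    {\<omega>\<in>space M. real K / 4 \<le> real (card (empty_cells 9 T K N (\<lambda>q. plane_point q \<omega>)))}"

definition many_late_hits :: "nat \<Rightarrow> nat \<Rightarrow> real \<Rightarrow> nat \<Rightarrow> 'a set" where
  "many_late_hits N N' T K =
    {\<omega>\<in>space M. real K / 4 \<le> real (late_cell_hits 9 T K N N' (\<lambda>q. plane_point q \<omega>))}"

definition many_roof_hits :: "nat \<Rightarrow> real \<Rightarrow> nat \<Rightarrow> 'a set" where
  "many_roof_hits N' T K =
    {\<omega>\<in>space M. real K / 4 \<le> real (roof_hits 9 T K N' (\<lambda>q. plane_point q \<omega>))}"

lemma many_empty_cells_eq: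
  "many_empty_cells N T K = (\<Union>S\<in>{S. S \<subseteq> {..<K} \<and> card S = nat \<lceil>real K / 4\<rceil>}.
     {\<omega>\<in>space M. \<forall>q\<in>{1..N}. plane_point q \<omega> \<notin> (\<Union>j\<in>S. cell 9 T j)})"
proof -
  have "finite (empty_cells 9 T K N p)" for p by (simp add: empty_cells_def)
  moreover have "S \<subseteq> empty_cells 9 T K N (\<lambda>q. plane_point q \<omega>)
      \<longleftrightarrow> S \<subseteq> {..<K} \<and> (\<forall>q\<in>{1..N}. plane_point q \<omega> \<notin> (\<Union>j\<in>S. cell 9 T j))" for S \<omega>
    by (auto simp: empty_cells_def)
  ultimately show ?thesis
    unfolding many_empty_cells_def by (simp only: le_card_iff_ex_subset) blast
qed

lemma plane_points_avoid_events:
  assumes "U \<in> sets borel"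
  shows "{\<omega>\<in>space M. \<forall>q\<in>{1..N}. plane_point q \<omega> \<notin> U} \<in> events"
proof -
  have "{\<omega>\<in>space M. \<forall>q\<in>{1..N}. plane_point q \<omega> \<notin> U}
      = space M \<inter> (\<Inter>q\<in>{1..N}. {\<omega>\<in>space M. plane_point q \<omega> \<in> - U})" by auto
  then show ?thesis using plane_point_events assms by auto
qed

lemma many_empty_cells_events: "many_empty_cells N T K \<in> events"
  unfolding many_empty_cells_eq
proof (rule sets.finite_UN)
  fix S assume "S \<in> {S. S \<subseteq> {..<K} \<and> card S = nat \<lceil>real K / 4\<rceil>}"
  then have "finite S" by (auto intro: finite_subset)
  then show "{\<omega>\<in>space M. \<forall>q\<in>{1..N}. plane_point q \<omega> \<notin> (\<Union>j\<in>S. cell 9 T j)} \<in> events"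
    by (intro plane_points_avoid_events sets.finite_UN) auto
qed simp

lemma late_cell_hits_eq_sum:
  "real (late_cell_hits H T K N N' (\<lambda>q. plane_point q \<omega>))
    = (\<Sum>q\<in>{N<..N'}. indicator (\<Union>j<K. cell H T j) (plane_point q \<omega>))"
  by (simp add: late_cell_hits_def indicator_def sum.If_cases Int_def)

lemma roof_hits_eq_sum:
  "real (roof_hits H T K N' (\<lambda>q. plane_point q \<omega>))
    = (\<Sum>q\<in>{1..N'}. \<Sum>j<K. indicator (roof H T j) (plane_point q \<omega>))"
  by (simp add: roof_hits_def indicator_def sum.If_cases Int_def)

lemma many_late_hits_events: "many_late_hits N N' T K \<in> events"
proof -
  have "(\<lambda>\<omega>. \<Sum>q\<in>{N<..N'}. indicator (\<Union>j<K. cell 9 T j) (plane_point q \<omega>) :: real) \<in> borel_measurable M"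
    by (intro borel_measurable_sum borel_measurable_plane_point_comp) auto
  then show ?thesis unfolding many_late_hits_def late_cell_hits_eq_sum by measurable
qed

lemma many_roof_hits_events: "many_roof_hits N' T K \<in> events"
proof -
  have "(\<lambda>\<omega>. \<Sum>q\<in>{1..N'}. \<Sum>j<K. indicator (roof 9 T j) (plane_point q \<omega>) :: real) \<in> borel_measurable M"
    by (intro borel_measurable_sum borel_measurable_plane_point_comp) auto
  then show ?thesis unfolding many_roof_hits_def roof_hits_eq_sum by measurable
qed

lemma prob_avoid_cells_le:
  assumes N: "0 < N" and T: "T = ln (real N / 16)" and KT: "real K * 9 \<le> T"
    and S: "S \<subseteq> {..<K}" "real K / 4 \<le> real (card S)"
  shows "prob {\<omega>\<in>space M. \<forall>q\<in>{1..N}. plane_point q \<omega> \<notin> (\<Union>j\<in>S. cell 9 T j)} \<le> exp (- (2 * real K))"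
proof -
  have "prob {\<omega>\<in>space M. \<forall>q\<in>{1..N}. plane_point q \<omega> \<notin> (\<Union>j\<in>S. cell 9 T j)}
      \<le> exp (- (real (card S) * (exp (- T) * (1 - exp (- 9))) * real N))"
    using S(1) KT finite_subset[OF S(1)]
    by (intro prob_plane_points_avoid prob_plane_point_cells sets.finite_UN) auto
  also have "\<dots> \<le> exp (- (2 * real K))"
  proof -
    have "exp (- T) = 16 / real N" using N T by (simp add: exp_minus)
    then have "real (card S) * (exp (- T) * (1 - exp (- 9))) * real N = 16 * real (card S) * (1 - exp (- 9))"
      using N by simp
    moreover have "8 * real (card S) \<le> 16 * real (card S) * (1 - exp (- 9))"
      using mult_left_mono[OF exp_minus_nine_le, of "16 * real (card S)"] by (simp add: algebra_simps)
    ultimately have "2 * real K \<le> real (card S) * (exp (- T) * (1 - exp (- 9))) * real N"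
      using S(2) by linarith
    then show ?thesis by simp
  qed
  finally show ?thesis .
qed

lemma prob_many_empty_cells:
  assumes N: "0 < N" and T: "T = ln (real N / 16)" and KT: "real K * 9 \<le> T"
  shows "prob (many_empty_cells N T K) \<le> exp (- real K)"
proof -
  define SS where "SS = {S. S \<subseteq> {..<K} \<and> card S = nat \<lceil>real K / 4\<rceil>}"
  define avoid where "avoid S = {\<omega>\<in>space M. \<forall>q\<in>{1..N}. plane_point q \<omega> \<notin> (\<Union>j\<in>S. cell 9 T j)}" for S
  have "finite SS" by (simp add: SS_def)
  have "prob (many_empty_cells N T K) \<le> (\<Sum>S\<in>SS. prob (avoid S))"
    unfolding many_empty_cells_eq
  proof (fold SS_def avoid_def, rule measure_UNION_le[OF \<open>finite SS\<close>])
    fix S assume "S \<in> SS"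
    then have "finite S" by (auto simp: SS_def intro: finite_subset)
    then show "avoid S \<in> events" unfolding avoid_def by (intro plane_points_avoid_events sets.finite_UN) auto
  qed
  also have "\<dots> \<le> (\<Sum>S\<in>SS. exp (- (2 * real K)))"
  proof (rule sum_mono)
    fix S assume "S \<in> SS"
    then have "S \<subseteq> {..<K}" "real K / 4 \<le> real (card S)"
      using real_nat_ceiling_ge[of "real K / 4"] by (simp_all add: SS_def)
    then show "prob (avoid S) \<le> exp (- (2 * real K))"
      unfolding avoid_def by (rule prob_avoid_cells_le[OF N T KT])
  qed
  also have "\<dots> = real (card SS) * exp (- (2 * real K))" by simp
  also have "\<dots> \<le> exp (real K) * exp (- (2 * real K))"
  proof (rule mult_right_mono)
    have "real (card SS) = real (K choose nat \<lceil>real K / 4\<rceil>)" by (simp add: SS_def n_subsets)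
    also have "\<dots> \<le> 2 ^ K" using binomial_le_pow2[of K] by (simp flip: of_nat_le_iff)
    also have "\<dots> \<le> exp 1 ^ K" using exp_ge_add_one_self[of 1] by (intro power_mono) simp_all
    finally show "real (card SS) \<le> exp (real K)" by (simp add: exp_of_nat_mult[symmetric])
  qed simp
  also have "\<dots> = exp (- real K)" by (simp flip: exp_add)
  finally show ?thesis .
qed

lemma expectation_exp_indicator_plane_point_le:
  assumes "1 \<le> q" "U \<in> sets borel"
  shows "expectation (\<lambda>\<omega>. exp (indicator U (plane_point q \<omega>) :: real))
    \<le> 1 + 2 * prob {\<omega>\<in>space M. plane_point q \<omega> \<in> U}"
proof -
  have "expectation (\<lambda>\<omega>. exp (indicator U (plane_point q \<omega>) :: real))
      = expectation (\<lambda>\<omega>. exp (indicator {\<omega>\<in>space M. plane_point q \<omega> \<in> U} \<omega> :: real))"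
    by (rule Bochner_Integration.integral_cong) (auto simp: indicator_def)
  also have "\<dots> \<le> 1 + 2 * prob {\<omega>\<in>space M. plane_point q \<omega> \<in> U}"
    by (rule expectation_exp_indicator_le[OF plane_point_events[OF assms]])
  finally show ?thesis .
qed

lemma prob_many_late_hits:
  assumes N: "0 < N" and T: "T = ln (real N / 16)" and KT: "real K * 9 \<le> T"
    and N': "real N' \<le> real N + real N / 256"
  shows "prob (many_late_hits N N' T K) \<le> exp (- (real K / 8))"
proof -
  define U where "U = (\<Union>j<K. cell 9 T j)"
  have U: "U \<in> sets borel" by (simp add: U_def)
  have "prob (many_late_hits N N' T K)
      = prob {\<omega>\<in>space M. real K / 4 \<le> (\<Sum>q\<in>{N<..N'}. indicator U (plane_point q \<omega>))}"
    unfolding many_late_hits_def late_cell_hits_eq_sum U_def ..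
  also have "\<dots> \<le> exp (real (card {N<..N'}) * (32 * real K / real N) - real K / 4)"
  proof (rule prob_sum_ge_le_exp)
    show "indep_vars (\<lambda>_. borel) (\<lambda>q \<omega>. indicator U (plane_point q \<omega>) :: real) {N<..N'}"
      using U by (intro indep_plane_point_comp) auto
    fix q assume "q \<in> {N<..N'}"
    then have q: "1 \<le> q" by simp
    have "prob {\<omega>\<in>space M. plane_point q \<omega> \<in> U} = real K * (exp (- T) * (1 - exp (- 9)))"
      unfolding U_def using prob_plane_point_cells[OF q, of 9 "{..<K}" K T] KT by simp
    also have "\<dots> \<le> real K * (16 / real N)"
    proof (intro mult_left_mono)
      have "exp (- T) * (1 - exp (- 9)) \<le> exp (- T)" by (rule mult_left_le) auto
      then show "exp (- T) * (1 - exp (- 9)) \<le> 16 / real N" using N T by (simp add: exp_minus)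
    qed simp
    finally show "expectation (\<lambda>\<omega>. exp (indicator U (plane_point q \<omega>))) \<le> 1 + 32 * real K / real N"
      using expectation_exp_indicator_plane_point_le[OF q U] by simp
  qed (auto simp: indicator_def)
  also have "\<dots> \<le> exp (- (real K / 8))"
  proof -
    have "real (card {N<..N'}) \<le> real N / 256" using N' by (cases "N \<le> N'") (auto simp: of_nat_diff)
    then have "real (card {N<..N'}) * (32 * real K / real N) \<le> real N / 256 * (32 * real K / real N)"
      by (intro mult_right_mono) auto
    also have "\<dots> = real K / 8" using N by (simp add: field_simps)
    finally show ?thesis by simp
  qed
  finally show ?thesis .
qed

lemma expectation_exp_roof_count_le_level:
  assumes q: "1 \<le> q" and N: "0 < N" and T: "T = ln (real N / 16)" and KT: "real K * 9 \<le> T"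
  shows "expectation (\<lambda>\<omega>. exp (\<Sum>j<K. indicator (roof 9 T j) (plane_point q \<omega>)))
    \<le> 1 + 16 * real K / (255 * real N)"
proof -
  have "(\<Sum>t\<in>{1..K}. exp (real t) * (real K * exp (- T - real t * 9)))
      = real K * exp (- T) * (\<Sum>t\<in>{1..K}. exp (- 8) ^ t)"
    unfolding sum_distrib_left
    by (intro sum.cong refl) (simp add: exp_of_nat_mult[symmetric] algebra_simps flip: exp_add)
  also have "\<dots> \<le> real K * exp (- T) * (1 / 255)"
  proof (intro mult_left_mono)
    have "(\<Sum>t\<in>{1..K}. exp (- 8) ^ t) \<le> exp (- 8) / (1 - exp (- 8 :: real))"
      using exp_minus_eight_le by (intro sum_power_le_geometric) auto
    also have "\<dots> \<le> (1 / 256) / (1 - 1 / 256)"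
      using exp_minus_eight_le by (intro frac_le) auto
    finally show "(\<Sum>t\<in>{1..K}. exp (- 8 :: real) ^ t) \<le> 1 / 255" by simp
  qed simp
  finally show ?thesis
    using expectation_exp_roof_count_le[OF q, of 9 K T] KT N T by (simp add: exp_minus)
qed

lemma prob_many_roof_hits:
  assumes N: "0 < N" and T: "T = ln (real N / 16)" and KT: "real K * 9 \<le> T"
    and N': "real N' \<le> 2 * real N"
  shows "prob (many_roof_hits N' T K) \<le> exp (- (real K / 9))"
proof -
  have "prob (many_roof_hits N' T K)
      = prob {\<omega>\<in>space M. real K / 4 \<le> (\<Sum>q\<in>{1..N'}. \<Sum>j<K. indicator (roof 9 T j) (plane_point q \<omega>))}"
    unfolding many_roof_hits_def roof_hits_eq_sum ..
  also have "\<dots> \<le> exp (real (card {1..N'}) * (16 * real K / (255 * real N)) - real K / 4)"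
  proof (rule prob_sum_ge_le_exp)
    show "indep_vars (\<lambda>_. borel) (\<lambda>q \<omega>. \<Sum>j<K. indicator (roof 9 T j) (plane_point q \<omega>) :: real) {1..N'}"
      by (intro indep_plane_point_comp borel_measurable_sum) auto
    show "(\<Sum>j<K. indicator (roof 9 T j) (plane_point q \<omega>)) \<le> real K" for q \<omega>
      using sum_mono[of "{..<K}" "\<lambda>j. indicator (roof 9 T j) (plane_point q \<omega>) :: real" "\<lambda>_. 1"]
      by (simp add: indicator_def)
  qed (use expectation_exp_roof_count_le_level[OF _ N T KT] in simp_all)
  also have "\<dots> \<le> exp (- (real K / 9))"
  proof -
    have "real (card {1..N'}) * (16 * real K / (255 * real N)) \<le> 2 * real N * (16 * real K / (255 * real N))"
      using N' by (intro mult_right_mono) auto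
    also have "\<dots> = 32 * real K / 255" using N by (simp add: field_simps)
    finally show ?thesis by (simp only: exp_le_cancel_iff)
  qed
  finally show ?thesis .
qed

end

section \<open>Epochs\<close>

text \<open>The ratio \<open>513/512\<close> keeps \<open>N\<^sub>i\<^sub>+\<^sub>1 \<le> N\<^sub>i + N\<^sub>i/256\<close>, so that few late points reach the cells,
  while the failure probabilities \<open>exp (-K\<^sub>i/9)\<close> still decay geometrically in \<open>i\<close>.\<close>

definition epoch_start :: "nat \<Rightarrow> nat" where
  "epoch_start i = nat \<lceil>(513 / 512 :: real) ^ i\<rceil>"

definition epoch_level :: "nat \<Rightarrow> real" where
  "epoch_level i = ln (real (epoch_start i) / 16)"

definition epoch_cells :: "nat \<Rightarrow> nat" where
  "epoch_cells i = nat \<lfloor>epoch_level i / 9\<rfloor>"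

lemma epoch_start_bounds: "(513 / 512) ^ i \<le> real (epoch_start i)" "real (epoch_start i) < (513 / 512) ^ i + 1"
proof -
  have "0 \<le> (513 / 512 :: real) ^ i" by simp
  then show "(513 / 512) ^ i \<le> real (epoch_start i)" "real (epoch_start i) < (513 / 512) ^ i + 1"
    unfolding epoch_start_def by linarith+
qed

lemma mono_epoch_start: "mono epoch_start"
  unfolding epoch_start_def by (intro monoI nat_mono ceiling_mono power_increasing) auto

lemma epoch_start_Suc_le:
  assumes "512 \<le> epoch_start i"
  shows "real (epoch_start (Suc i)) \<le> real (epoch_start i) + real (epoch_start i) / 256"
proof -
  have "real (epoch_start (Suc i)) < 513 / 512 * (513 / 512) ^ i + 1"
    using epoch_start_bounds(2)[of "Suc i"] by simp
  also have "\<dots> \<le> 513 / 512 * real (epoch_start i) + 1"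
    using epoch_start_bounds(1)[of i] by simp
  finally show ?thesis using assms by simp
qed

lemma filterlim_epoch_start: "filterlim epoch_start at_top sequentially"
  unfolding filterlim_at_top
proof
  fix Z :: nat
  obtain i\<^sub>0 where "real Z < (513 / 512) ^ i\<^sub>0" using real_arch_pow[of "513 / 512"] by auto
  then have "Z \<le> epoch_start i\<^sub>0" using epoch_start_bounds(1)[of i\<^sub>0] by linarith
  then show "\<forall>\<^sub>F i in sequentially. Z \<le> epoch_start i"
    using mono_epoch_start unfolding eventually_sequentially by (meson monoD order_trans)
qed

lemma epoch_cells_bounds:
  assumes "16 \<le> epoch_start i"
  shows "real (epoch_cells i) * 9 \<le> epoch_level i" "epoch_level i / 9 - 1 \<le> real (epoch_cells i)"
proof -
  have "0 \<le> epoch_level i" using assms by (simp add: epoch_level_def)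
  then show "real (epoch_cells i) * 9 \<le> epoch_level i" "epoch_level i / 9 - 1 \<le> real (epoch_cells i)"
    unfolding epoch_cells_def by linarith+
qed

lemma ln_le_epoch_cells:
  assumes N: "512 \<le> epoch_start i" and n: "epoch_start i \<le> n" "n < epoch_start (Suc i)"
  shows "(ln (real n) - ln 32) / 36 - 1 / 4 \<le> real (epoch_cells i) / 4"
proof -
  have "real n \<le> 2 * real (epoch_start i)" using epoch_start_Suc_le[OF N] n(2) by simp
  then have "ln (real n / 32) \<le> epoch_level i"
    using N n(1) by (simp add: epoch_level_def)
  then have "ln (real n) - ln 32 \<le> epoch_level i" using N n(1) by (simp add: ln_div)
  moreover have "epoch_level i / 9 - 1 \<le> real (epoch_cells i)"
    using N by (intro epoch_cells_bounds(2)) simp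
  ultimately show ?thesis by (simp add: field_simps)
qed

lemma epoch_containing:
  assumes "epoch_start i\<^sub>0 \<le> n"
  obtains i where "i\<^sub>0 \<le> i" "epoch_start i \<le> n" "n < epoch_start (Suc i)"
proof -
  have "\<forall>\<^sub>F j in sequentially. Suc n \<le> epoch_start j"
    using filterlim_epoch_start by (simp add: filterlim_at_top)
  then obtain j where "n < epoch_start j" unfolding eventually_sequentially by (meson Suc_le_lessD order_refl)
  define j' where "j' = (LEAST j. n < epoch_start j)"
  have j': "n < epoch_start j'"
    unfolding j'_def by (rule LeastI) fact
  have "i\<^sub>0 < j'"
  proof (rule ccontr)
    assume "\<not> i\<^sub>0 < j'"
    then have "epoch_start j' \<le> epoch_start i\<^sub>0" using mono_epoch_start by (simp add: monoD)
    then show False using j' assms by simp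
  qed
  then obtain i where i: "j' = Suc i" "i\<^sub>0 \<le> i" by (cases j') auto
  have "\<not> n < epoch_start i"
    using i(1) unfolding j'_def by (metis Suc_n_not_le_n Least_le)
  then show ?thesis using that i j' by simp
qed

context exponential_sample
begin

definition bad_epoch :: "nat \<Rightarrow> 'a set" where
  "bad_epoch i = many_empty_cells (epoch_start i) (epoch_level i) (epoch_cells i)
    \<union> many_late_hits (epoch_start i) (epoch_start (Suc i)) (epoch_level i) (epoch_cells i)
    \<union> many_roof_hits (epoch_start (Suc i)) (epoch_level i) (epoch_cells i)"

lemma bad_epoch_events: "bad_epoch i \<in> events"
  unfolding bad_epoch_def
  using many_empty_cells_events many_late_hits_events many_roof_hits_events by blast

lemma prob_bad_epoch:
  assumes N: "512 \<le> epoch_start i"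
  shows "prob (bad_epoch i) \<le> 3 * exp (- (real (epoch_cells i) / 9))"
proof -
  have N0: "0 < epoch_start i" and T: "epoch_level i = ln (real (epoch_start i) / 16)"
    and KT: "real (epoch_cells i) * 9 \<le> epoch_level i"
    using N epoch_cells_bounds(1)[of i] by (simp_all add: epoch_level_def)
  define E where "E = many_empty_cells (epoch_start i) (epoch_level i) (epoch_cells i)"
  define L where "L = many_late_hits (epoch_start i) (epoch_start (Suc i)) (epoch_level i) (epoch_cells i)"
  define R where "R = many_roof_hits (epoch_start (Suc i)) (epoch_level i) (epoch_cells i)"
  have ev: "E \<in> events" "L \<in> events" "R \<in> events"
    by (simp_all add: E_def L_def R_def many_empty_cells_events many_late_hits_events many_roof_hits_events)
  have "prob (bad_epoch i) \<le> prob E + prob L + prob R"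
    unfolding bad_epoch_def E_def[symmetric] L_def[symmetric] R_def[symmetric]
    using measure_Un_le[OF sets.Un[OF ev(1,2)] ev(3)] measure_Un_le[OF ev(1,2)] by linarith
  also have "\<dots> \<le> exp (- real (epoch_cells i)) + exp (- (real (epoch_cells i) / 8))
      + exp (- (real (epoch_cells i) / 9))"
  proof (intro add_mono)
    show "prob E \<le> exp (- real (epoch_cells i))"
      unfolding E_def by (rule prob_many_empty_cells[OF N0 T KT])
    show "prob L \<le> exp (- (real (epoch_cells i) / 8))"
      unfolding L_def by (rule prob_many_late_hits[OF N0 T KT epoch_start_Suc_le[OF N]])
    show "prob R \<le> exp (- (real (epoch_cells i) / 9))"
      unfolding R_def using epoch_start_Suc_le[OF N] by (intro prob_many_roof_hits[OF N0 T KT]) simp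
  qed
  also have "\<dots> \<le> 3 * exp (- (real (epoch_cells i) / 9))"
  proof -
    have "exp (- real (epoch_cells i)) \<le> exp (- (real (epoch_cells i) / 9))"
      "exp (- (real (epoch_cells i) / 8)) \<le> exp (- (real (epoch_cells i) / 9))" by simp_all
    then show ?thesis by linarith
  qed
  finally show ?thesis .
qed

lemma summable_prob_bad_epoch: "summable (\<lambda>i. prob (bad_epoch i))"
proof -
  define r :: real where "r = exp (- (ln (513 / 512) / 81))"
  define C :: real where "C = 3 * exp (1 / 9 + ln 16 / 81)"
  have "\<forall>\<^sub>F i in sequentially. 512 \<le> epoch_start i"
    using filterlim_epoch_start by (simp add: filterlim_at_top)
  then obtain i\<^sub>0 where i\<^sub>0: "\<And>i. i\<^sub>0 \<le> i \<Longrightarrow> 512 \<le> epoch_start i"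
    unfolding eventually_sequentially by blast
  show ?thesis
  proof (rule summable_comparison_test')
    show "summable (\<lambda>i. C * r ^ i)" by (simp add: r_def)
    fix i assume "i\<^sub>0 \<le> i"
    then have N: "512 \<le> epoch_start i" by (rule i\<^sub>0)
    have "real i * ln (513 / 512) = ln ((513 / 512) ^ i)" by (simp add: ln_realpow)
    also have "\<dots> \<le> ln (real (epoch_start i))"
      using epoch_start_bounds(1)[of i] N by (subst ln_le_cancel_iff) auto
    finally have "real i * ln (513 / 512) - ln 16 \<le> epoch_level i"
      using N by (simp add: epoch_level_def ln_div)
    then have "- (real (epoch_cells i) / 9) \<le> (1 / 9 + ln 16 / 81) + real i * (- (ln (513 / 512) / 81))"
      using epoch_cells_bounds(2)[of i] N by (simp add: field_simps)
    then have "exp (- (real (epoch_cells i) / 9))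
        \<le> exp ((1 / 9 + ln 16 / 81) + real i * (- (ln (513 / 512) / 81)))"
      by simp
    also have "\<dots> = exp (1 / 9 + ln 16 / 81) * r ^ i"
      by (simp only: exp_add exp_of_nat_mult r_def)
    finally show "norm (prob (bad_epoch i)) \<le> C * r ^ i"
      using prob_bad_epoch[OF N] by (simp add: C_def mult.assoc)
  qed
qed

lemma num_records_ge_epoch_cells:
  assumes "\<omega> \<in> space M - bad_epoch i" "epoch_start i \<le> n" "n \<le> epoch_start (Suc i)"
  shows "real (epoch_cells i) / 4 < real (num_records d (\<lambda>k j. X k j \<omega>) n)"
proof -
  define p where "p = (\<lambda>q. plane_point q \<omega>)"
  have "card (good_cells 9 (epoch_level i) (epoch_cells i) (epoch_start i) (epoch_start (Suc i)) p)
      \<le> num_records d (\<lambda>k j. X k j \<omega>) n"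
    using card_good_cells_le_num_records[OF two_le_dim _ assms(2,3), of 9]
    by (simp add: p_def plane_point_def)
  moreover have "epoch_cells i
      \<le> card (good_cells 9 (epoch_level i) (epoch_cells i) (epoch_start i) (epoch_start (Suc i)) p)
        + card (empty_cells 9 (epoch_level i) (epoch_cells i) (epoch_start i) p)
        + late_cell_hits 9 (epoch_level i) (epoch_cells i) (epoch_start i) (epoch_start (Suc i)) p
        + roof_hits 9 (epoch_level i) (epoch_cells i) (epoch_start (Suc i)) p"
    by (rule card_good_cells_ge) simp
  moreover have
    "real (card (empty_cells 9 (epoch_level i) (epoch_cells i) (epoch_start i) p)) < real (epoch_cells i) / 4"
    "real (late_cell_hits 9 (epoch_level i) (epoch_cells i) (epoch_start i) (epoch_start (Suc i)) p)
      < real (epoch_cells i) / 4"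
    "real (roof_hits 9 (epoch_level i) (epoch_cells i) (epoch_start (Suc i)) p) < real (epoch_cells i) / 4"
    using assms(1) by (auto simp: bad_epoch_def many_empty_cells_def many_late_hits_def many_roof_hits_def p_def)
  ultimately show ?thesis by linarith
qed

theorem AE_eventually_num_records_ge_ln:
  "AE \<omega> in M. \<forall>\<^sub>F n in sequentially.
     (ln (real n) - ln 32) / 36 - 1 / 4 \<le> real (num_records d (\<lambda>k j. X k j \<omega>) n)"
proof -
  have "AE \<omega> in M. \<forall>\<^sub>F i in sequentially. \<omega> \<in> space M - bad_epoch i"
    using bad_epoch_events summable_prob_bad_epoch
    by (intro borel_cantelli_AE1) (auto simp: less_top[symmetric])
  then show ?thesis
  proof (rule AE_mp, intro AE_I2 impI)
    fix \<omega> assume "\<forall>\<^sub>F i in sequentially. \<omega> \<in> space M - bad_epoch i"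
    moreover have "\<forall>\<^sub>F i in sequentially. 512 \<le> epoch_start i"
      using filterlim_epoch_start by (simp add: filterlim_at_top)
    ultimately have "\<forall>\<^sub>F i in sequentially. \<omega> \<in> space M - bad_epoch i \<and> 512 \<le> epoch_start i"
      by (rule eventually_conj)
    then obtain i\<^sub>0 where i\<^sub>0: "\<And>i. i\<^sub>0 \<le> i \<Longrightarrow> \<omega> \<in> space M - bad_epoch i \<and> 512 \<le> epoch_start i"
      unfolding eventually_sequentially by blast
    have "(ln (real n) - ln 32) / 36 - 1 / 4 \<le> real (num_records d (\<lambda>k j. X k j \<omega>) n)"
      if n: "epoch_start i\<^sub>0 \<le> n" for n
    proof -
      obtain i where i: "i\<^sub>0 \<le> i" "epoch_start i \<le> n" "n < epoch_start (Suc i)"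
        using epoch_containing[OF n] by blast
      have "(ln (real n) - ln 32) / 36 - 1 / 4 \<le> real (epoch_cells i) / 4"
        using i\<^sub>0[OF i(1)] i(2,3) by (intro ln_le_epoch_cells) auto
      also have "\<dots> < real (num_records d (\<lambda>k j. X k j \<omega>) n)"
        using num_records_ge_epoch_cells i\<^sub>0[OF i(1)] i(2,3) by simp
      finally show ?thesis by simp
    qed
    then show "\<forall>\<^sub>F n in sequentially. (ln (real n) - ln 32) / 36 - 1 / 4
        \<le> real (num_records d (\<lambda>k j. X k j \<omega>) n)"
      unfolding eventually_sequentially by blast
  qed
qed

end

lemma one_le_liminf_ratio:
  fixes f g :: "nat \<Rightarrow> real"
  assumes "\<forall>\<^sub>F n in sequentially. g n \<le> f n" "\<forall>\<^sub>F n in sequentially. 0 < g n"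
  shows "1 \<le> liminf (\<lambda>n. ereal (f n / g n))"
  by (rule Liminf_bounded) (use assms in \<open>eventually_elim, simp\<close>)

lemma eventually_ln_ratio_le:
  assumes "2 \<le> d"
  shows "\<forall>\<^sub>F n in sequentially. 0 < ln (real n) / (real d * ln (ln (real n)))
    \<and> ln (real n) / (real d * ln (ln (real n))) \<le> (ln (real n) - ln 32) / 36 - 1 / 4"
proof -
  have "\<forall>\<^sub>F x in at_top. ln x / (2 * ln (ln x)) \<le> (ln x - ln 32) / 36 - 1 / (4 :: real)"
    "\<forall>\<^sub>F x in at_top. 0 < ln (ln (x :: real))" "\<forall>\<^sub>F x in at_top. 0 < ln (x :: real)"
    by real_asymp+
  then have "\<forall>\<^sub>F n in sequentially.
      ln (real n) / (2 * ln (ln (real n))) \<le> (ln (real n) - ln 32) / 36 - 1 / 4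
      \<and> 0 < ln (ln (real n)) \<and> 0 < ln (real n)"
    by (intro eventually_compose_filterlim[OF _ filterlim_real_sequentially] eventually_conj)
  then show ?thesis
  proof eventually_elim
    case (elim n)
    then have "ln (real n) / (real d * ln (ln (real n))) \<le> ln (real n) / (2 * ln (ln (real n)))"
      using assms by (intro divide_left_mono mult_right_mono) auto
    then show ?case using elim assms by auto
  qed
qed

theorem theorem3p4:
  fixes M :: "'a measure" and X :: "nat \<Rightarrow> nat \<Rightarrow> 'a \<Rightarrow> real" and d :: nat
  assumes "prob_space M"
    and "d \<ge> 2"
    and "prob_space.indep_vars M (\<lambda>_. borel) (\<lambda>(k, j). X k j) ({1..} \<times> {..<d})"
    and "\<And>k j. k \<ge> 1 \<Longrightarrow> j < d \<Longrightarrow> distributed M lborel (X k j) (exponential_density 1)"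
  shows "AE \<omega> in M. liminf (\<lambda>n. ereal (real (num_records d (\<lambda>k j. X k j \<omega>) n)
                 / (ln (real n) / (real d * ln (ln (real n)))))) \<ge> 1"
proof -
  interpret exponential_sample M X d
    by (intro exponential_sample.intro exponential_sample_axioms.intro assms)
  show ?thesis
    using AE_eventually_num_records_ge_ln
  proof eventually_elim
    case (elim \<omega>)
    with eventually_ln_ratio_le[OF \<open>d \<ge> 2\<close>]
    show ?case
      by (intro one_le_liminf_ratio; elim eventually_rev_mp) (auto elim!: eventually_mono)
  qed
qed

end
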